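(* Consider the nonlinear program and the objects $\mathcal{G}_\alpha$, $K_\alpha(x)$, $\Lambda_\alpha(x)$ described in the context, with $\alpha>0$ and $x\in\mathbb{R}^n$. If $\Lambda_\alpha(x)\ne\emptyset$, then: (i) every $(u,v)\in\Lambda_\alpha(x)$ is a minimizer of $\left\|\frac{\partial g}{\partial x}(x)^\top u+\frac{\partial h}{\partial x}(x)^\top v\right\|^2$ over $(u,v)\in K_\alpha(x)$; (ii) for every minimizer $(u,v)$ of that problem, $\mathcal{G}_\alpha(x)=-\nabla f(x)-\frac{\partial g}{\partial x}(x)^\top u-\frac{\partial h}{\partial x}(x)^\top v$, i.e. $\mathcal{G}_\alpha$ is the closed-loop vector field obtained by applying this feedback to the control system $\dot x=-\nabla f(x)-\frac{\partial g}{\partial x}(x)^\top u-\frac{\partial h}{\partial x}(x)^\top v$.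
   Context: Let $f:\mathbb{R}^n\to\mathbb{R}$, $g:\mathbb{R}^n\to\mathbb{R}^m$, $h:\mathbb{R}^n\to\mathbb{R}^k$ be continuously differentiable (program: minimize $f$ subject to $g\le0$, $h=0$). Abbreviate $G=\frac{\partial g}{\partial x}(x)$, $H=\frac{\partial h}{\partial x}(x)$. For $\alpha>0$, $\mathcal{G}_\alpha(x)$ is the unique minimizer over $\xi\in\mathbb{R}^n$ of $\frac12\|\xi+\nabla f(x)\|^2$ subject to $G\xi\le-\alpha g(x)$, $H\xi=-\alpha h(x)$. $\Lambda_\alpha(x)$ is the set of $(u,v)\in\mathbb{R}^m_{\ge0}\times\mathbb{R}^k$ for which there exists $\xi\in\mathbb{R}^n$ with $\xi+\nabla f(x)+G^\top u+H^\top v=0$, $G\xi+\alpha g(x)\le0$, $H\xi+\alpha h(x)=0$, $u\ge0$, $u^\top(G\xi+\alpha g(x))=0$. The admissible control set is $K_\alpha(x)=\{(u,v)\in\mathbb{R}^m_{\ge0}\times\mathbb{R}^k: -GG^\top u-GH^\top v\le G\nabla f(x)-\alpha g(x),\ -HG^\top u-HH^\top v=H\nabla f(x)-\alpha h(x)\}$. *)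

theory Defs
  imports "HOL-Analysis.Analysis"
begin

text \<open>Data at a fixed point x: gradf = grad f(x), G = dg/dx(x) (an m x n matrix),
  H = dh/dx(x) (a k x n matrix), gx = g(x), hx = h(x).\<close>

definition feasible_set ::
  "real \<Rightarrow> real^'n^'m \<Rightarrow> real^'n^'k \<Rightarrow> real^'m \<Rightarrow> real^'k \<Rightarrow> (real^'n) set" where
  "feasible_set \<alpha> G H gx hx =
     {\<xi>. (\<forall>i. (G *v \<xi>) $ i \<le> - \<alpha> * gx $ i) \<and> H *v \<xi> = - (\<alpha> *\<^sub>R hx)}"

definition G_alpha ::
  "real \<Rightarrow> real^'n \<Rightarrow> real^'n^'m \<Rightarrow> real^'n^'k \<Rightarrow> real^'m \<Rightarrow> real^'k \<Rightarrow> real^'n" where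
  "G_alpha \<alpha> gradf G H gx hx =
     (THE \<xi>. \<xi> \<in> feasible_set \<alpha> G H gx hx \<and>
        (\<forall>\<zeta> \<in> feasible_set \<alpha> G H gx hx.
            (1/2) * (norm (\<xi> + gradf))\<^sup>2 \<le> (1/2) * (norm (\<zeta> + gradf))\<^sup>2))"

definition Lambda_alpha ::
  "real \<Rightarrow> real^'n \<Rightarrow> real^'n^'m \<Rightarrow> real^'n^'k \<Rightarrow> real^'m \<Rightarrow> real^'k \<Rightarrow> ((real^'m) \<times> (real^'k)) set" where
  "Lambda_alpha \<alpha> gradf G H gx hx =
     {(u, v). (\<forall>i. 0 \<le> u $ i) \<and>
        (\<exists>\<xi>. \<xi> + gradf + transpose G *v u + transpose H *v v = 0 \<and>
             (\<forall>i. (G *v \<xi> + \<alpha> *\<^sub>R gx) $ i \<le> 0) \<and>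
             H *v \<xi> + \<alpha> *\<^sub>R hx = 0 \<and>
             u \<bullet> (G *v \<xi> + \<alpha> *\<^sub>R gx) = 0)}"

definition K_alpha ::
  "real \<Rightarrow> real^'n \<Rightarrow> real^'n^'m \<Rightarrow> real^'n^'k \<Rightarrow> real^'m \<Rightarrow> real^'k \<Rightarrow> ((real^'m) \<times> (real^'k)) set" where
  "K_alpha \<alpha> gradf G H gx hx =
     {(u, v). (\<forall>i. 0 \<le> u $ i) \<and>
        (\<forall>i. (- ((G ** transpose G) *v u) - (G ** transpose H) *v v) $ i
              \<le> (G *v gradf - \<alpha> *\<^sub>R gx) $ i) \<and>
        - ((H ** transpose G) *v u) - (H ** transpose H) *v v = H *v gradf - \<alpha> *\<^sub>R hx}"

end

theory Submission
  imports Defs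
begin

text \<open>
  For a multiplier \<open>(u, v) \<in> \<Lambda>\<^sub>\<alpha>(x)\<close> the closed-loop field
  \<open>\<xi> = -\<nabla>f(x) - G\<^sup>T u - H\<^sup>T v\<close> is feasible and, by complementary slackness, satisfies the
  variational inequality \<open>(\<xi> + \<nabla>f(x)) \<bullet> (\<zeta> - \<xi>) \<ge> 0\<close> for every feasible \<open>\<zeta>\<close>; by
  Pythagoras it is therefore the unique point of the feasible set nearest to \<open>-\<nabla>f(x)\<close>, i.e.
  \<open>\<G>\<^sub>\<alpha>(x)\<close>. On the other hand \<open>(u, v) \<in> K\<^sub>\<alpha>(x)\<close> says exactly that \<open>u \<ge> 0\<close> and the
  closed-loop field of \<open>(u, v)\<close> is feasible, and \<open>|G\<^sup>T u + H\<^sup>T v|\<close> is its distance to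
  \<open>-\<nabla>f(x)\<close>. So minimizing \<open>|G\<^sup>T u + H\<^sup>T v|\<close> over \<open>K\<^sub>\<alpha>(x)\<close> is the projection problem
  defining \<open>\<G>\<^sub>\<alpha>(x)\<close> in disguise.
\<close>

lemma variational_ineq_norm_sq_bound:
  fixes x z w :: "'a::real_inner"
  assumes "0 \<le> (x + w) \<bullet> (z - x)"
  shows "(norm (x + w))\<^sup>2 + (norm (z - x))\<^sup>2 \<le> (norm (z + w))\<^sup>2"
  using assms dot_norm[of "x + w" "z - x"] by (simp add: add.commute)

lemma variational_ineq_norm_sq_le:
  fixes x z w :: "'a::real_inner"
  assumes "0 \<le> (x + w) \<bullet> (z - x)"
  shows "(norm (x + w))\<^sup>2 \<le> (norm (z + w))\<^sup>2"
  using variational_ineq_norm_sq_bound[OF assms] zero_le_power2[of "norm (z - x)"] by linarith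

lemma variational_ineq_unique:
  fixes x z w :: "'a::real_inner"
  assumes "0 \<le> (x + w) \<bullet> (z - x)" and "(norm (z + w))\<^sup>2 \<le> (norm (x + w))\<^sup>2"
  shows "z = x"
proof -
  have "(norm (z - x))\<^sup>2 \<le> 0"
    using variational_ineq_norm_sq_bound[OF assms(1)] assms(2) by linarith
  then show ?thesis by simp
qed

lemma mem_feasible_set_iff:
  "\<zeta> \<in> feasible_set \<alpha> G H gx hx \<longleftrightarrow>
    (\<forall>i. (G *v \<zeta> + \<alpha> *\<^sub>R gx) $ i \<le> 0) \<and> H *v \<zeta> + \<alpha> *\<^sub>R hx = 0"
  by (simp add: feasible_set_def eq_neg_iff_add_eq_0 add.commute[of "(G *v \<zeta>) $ _"]
      real_add_le_0_iff)

lemma G_alpha_eqI: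
  assumes feasible: "\<xi> \<in> feasible_set \<alpha> G H gx hx"
    and variational: "\<forall>\<zeta> \<in> feasible_set \<alpha> G H gx hx. 0 \<le> (\<xi> + w) \<bullet> (\<zeta> - \<xi>)"
  shows "G_alpha \<alpha> w G H gx hx = \<xi>"
  unfolding G_alpha_def
proof (rule the_equality)
  show "\<xi> \<in> feasible_set \<alpha> G H gx hx \<and> (\<forall>\<zeta> \<in> feasible_set \<alpha> G H gx hx.
      1/2 * (norm (\<xi> + w))\<^sup>2 \<le> 1/2 * (norm (\<zeta> + w))\<^sup>2)"
  proof (intro conjI ballI feasible)
    fix \<zeta> assume "\<zeta> \<in> feasible_set \<alpha> G H gx hx"
    with variational have "0 \<le> (\<xi> + w) \<bullet> (\<zeta> - \<xi>)" by blast
    then have "(norm (\<xi> + w))\<^sup>2 \<le> (norm (\<zeta> + w))\<^sup>2"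
      by (rule variational_ineq_norm_sq_le)
    then show "1/2 * (norm (\<xi> + w))\<^sup>2 \<le> 1/2 * (norm (\<zeta> + w))\<^sup>2"
      by simp
  qed
next
  fix \<zeta>
  assume "\<zeta> \<in> feasible_set \<alpha> G H gx hx \<and> (\<forall>\<zeta>' \<in> feasible_set \<alpha> G H gx hx.
      1/2 * (norm (\<zeta> + w))\<^sup>2 \<le> 1/2 * (norm (\<zeta>' + w))\<^sup>2)"
  with feasible variational show "\<zeta> = \<xi>"
    by (auto intro: variational_ineq_unique)
qed

definition closed_loop_field ::
  "real^'n \<Rightarrow> real^'n^'m \<Rightarrow> real^'n^'k \<Rightarrow> real^'m \<Rightarrow> real^'k \<Rightarrow> real^'n" where
  "closed_loop_field w G H u v = - w - transpose G *v u - transpose H *v v"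

lemma closed_loop_field_add:
  "closed_loop_field w G H u v + w = - (transpose G *v u + transpose H *v v)"
  by (simp add: closed_loop_field_def algebra_simps del: transpose_matrix_vector)

lemma norm_closed_loop_field_add:
  "norm (closed_loop_field w G H u v + w) = norm (transpose G *v u + transpose H *v v)"
  by (simp only: closed_loop_field_add norm_minus_cancel)

lemma eq_closed_loop_field_iff:
  "\<xi> = closed_loop_field w G H u v \<longleftrightarrow> \<xi> + w + transpose G *v u + transpose H *v v = 0"
  by (auto simp: closed_loop_field_def algebra_simps eq_neg_iff_add_eq_0
      simp del: transpose_matrix_vector)

lemma K_alpha_iff_closed_loop_field_feasible:
  fixes G :: "real^'n^'m" and H :: "real^'n^'k"
  shows "(u, v) \<in> K_alpha \<alpha> w G H gx hx \<longleftrightarrow>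
     (\<forall>i. 0 \<le> u $ i) \<and> closed_loop_field w G H u v \<in> feasible_set \<alpha> G H gx hx"
proof -
  have mult: "A *v closed_loop_field w G H u v =
      - ((A ** transpose G) *v u) - (A ** transpose H) *v v - A *v w" for A :: "real^'n^'l"
    unfolding closed_loop_field_def
    by (simp add: matrix_vector_mult_diff_distrib matrix_vector_mul_assoc vec.neg
        del: transpose_matrix_vector)
  show ?thesis
    unfolding K_alpha_def feasible_set_def mem_Collect_eq case_prod_conv mult
    by (simp add: algebra_simps del: transpose_matrix_vector)
qed

lemma Lambda_alpha_imp_variational_ineq:
  fixes G :: "real^'n^'m" and H :: "real^'n^'k"
  assumes "(u, v) \<in> Lambda_alpha \<alpha> w G H gx hx"
  defines "\<xi> \<equiv> closed_loop_field w G H u v"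
  shows "\<forall>i. 0 \<le> u $ i" and "\<xi> \<in> feasible_set \<alpha> G H gx hx"
    and "\<forall>\<zeta> \<in> feasible_set \<alpha> G H gx hx. 0 \<le> (\<xi> + w) \<bullet> (\<zeta> - \<xi>)"
proof -
  from assms obtain u_nonneg: "\<forall>i. 0 \<le> u $ i"
    and ineq: "\<forall>i. (G *v \<xi> + \<alpha> *\<^sub>R gx) $ i \<le> 0"
    and eq: "H *v \<xi> + \<alpha> *\<^sub>R hx = 0"
    and slack: "u \<bullet> (G *v \<xi> + \<alpha> *\<^sub>R gx) = 0"
    unfolding Lambda_alpha_def eq_closed_loop_field_iff[symmetric] by blast
  show "\<forall>i. 0 \<le> u $ i" by (fact u_nonneg)
  show "\<xi> \<in> feasible_set \<alpha> G H gx hx"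
    using ineq eq by (simp add: mem_feasible_set_iff)
  show "\<forall>\<zeta> \<in> feasible_set \<alpha> G H gx hx. 0 \<le> (\<xi> + w) \<bullet> (\<zeta> - \<xi>)"
  proof
    fix \<zeta> assume "\<zeta> \<in> feasible_set \<alpha> G H gx hx"
    then have \<zeta>_ineq: "\<forall>i. (G *v \<zeta> + \<alpha> *\<^sub>R gx) $ i \<le> 0"
      and \<zeta>_eq: "H *v \<zeta> + \<alpha> *\<^sub>R hx = 0"
      by (simp_all add: mem_feasible_set_iff)
    have "u \<bullet> (G *v \<zeta> + \<alpha> *\<^sub>R gx) \<le> 0"
      unfolding inner_vec_def
      using u_nonneg \<zeta>_ineq by (auto intro: sum_nonpos mult_nonneg_nonpos)
    then have "u \<bullet> (G *v (\<zeta> - \<xi>)) \<le> 0"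
      using slack by (simp add: matrix_vector_mult_diff_distrib inner_diff_right inner_add_right)
    moreover have "H *v \<zeta> = H *v \<xi>"
      using eq \<zeta>_eq by (metis add_right_cancel)
    then have "H *v (\<zeta> - \<xi>) = 0"
      by (simp add: matrix_vector_mult_diff_distrib)
    ultimately show "0 \<le> (\<xi> + w) \<bullet> (\<zeta> - \<xi>)"
      unfolding \<xi>_def closed_loop_field_add
      by (simp add: inner_diff_left dot_lmul_matrix)
  qed
qed

lemma Lambda_alpha_minimizes_on_K_alpha:
  fixes G :: "real^'n^'m" and H :: "real^'n^'k"
  assumes "(u, v) \<in> Lambda_alpha \<alpha> w G H gx hx" and "(u', v') \<in> K_alpha \<alpha> w G H gx hx"
  shows "(norm (transpose G *v u + transpose H *v v))\<^sup>2
    \<le> (norm (transpose G *v u' + transpose H *v v'))\<^sup>2"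
proof -
  have "closed_loop_field w G H u' v' \<in> feasible_set \<alpha> G H gx hx"
    using assms(2) K_alpha_iff_closed_loop_field_feasible by blast
  with Lambda_alpha_imp_variational_ineq(3)[OF assms(1)]
  have "0 \<le> (closed_loop_field w G H u v + w) \<bullet>
      (closed_loop_field w G H u' v' - closed_loop_field w G H u v)"
    by blast
  from variational_ineq_norm_sq_le[OF this] show ?thesis
    by (simp only: norm_closed_loop_field_add)
qed

lemma Lambda_alpha_subset_K_alpha:
  fixes G :: "real^'n^'m" and H :: "real^'n^'k"
  shows "Lambda_alpha \<alpha> w G H gx hx \<subseteq> K_alpha \<alpha> w G H gx hx"
proof (rule subrelI)
  fix u v assume kkt: "(u, v) \<in> Lambda_alpha \<alpha> w G H gx hx"
  show "(u, v) \<in> K_alpha \<alpha> w G H gx hx"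
    unfolding K_alpha_iff_closed_loop_field_feasible
    using Lambda_alpha_imp_variational_ineq(1,2)[OF kkt] by blast
qed

lemma G_alpha_eq_closed_loop_field_of_minimizer:
  fixes G :: "real^'n^'m" and H :: "real^'n^'k"
  assumes "(u\<^sub>0, v\<^sub>0) \<in> Lambda_alpha \<alpha> w G H gx hx" and "(u, v) \<in> K_alpha \<alpha> w G H gx hx"
    and "(norm (transpose G *v u + transpose H *v v))\<^sup>2
      \<le> (norm (transpose G *v u\<^sub>0 + transpose H *v v\<^sub>0))\<^sup>2"
  shows "G_alpha \<alpha> w G H gx hx = closed_loop_field w G H u v"
proof -
  note kkt = Lambda_alpha_imp_variational_ineq[OF assms(1)]
  have "closed_loop_field w G H u v \<in> feasible_set \<alpha> G H gx hx"
    using assms(2) K_alpha_iff_closed_loop_field_feasible by blast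
  then have "closed_loop_field w G H u v = closed_loop_field w G H u\<^sub>0 v\<^sub>0"
    using kkt(3) assms(3) by (auto simp: norm_closed_loop_field_add intro: variational_ineq_unique)
  then show ?thesis
    using G_alpha_eqI[OF kkt(2,3)] by simp
qed

theorem mainTheorem6:
  fixes f :: "real^'n \<Rightarrow> real" and g :: "real^'n \<Rightarrow> real^'m" and h :: "real^'n \<Rightarrow> real^'k"
    and gradf :: "real^'n \<Rightarrow> real^'n"
    and Dg :: "real^'n \<Rightarrow> real^'n^'m" and Dh :: "real^'n \<Rightarrow> real^'n^'k"
    and \<alpha> :: real and x :: "real^'n"
  assumes f_C1: "\<And>y. (f has_derivative (\<lambda>d. gradf y \<bullet> d)) (at y)" "continuous_on UNIV gradf"
    and g_C1: "\<And>y. (g has_derivative (\<lambda>d. Dg y *v d)) (at y)" "continuous_on UNIV Dg"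
    and h_C1: "\<And>y. (h has_derivative (\<lambda>d. Dh y *v d)) (at y)" "continuous_on UNIV Dh"
    and alpha_pos: "\<alpha> > 0"
    and Lambda_ne: "Lambda_alpha \<alpha> (gradf x) (Dg x) (Dh x) (g x) (h x) \<noteq> {}"
  shows "(\<forall>(u, v) \<in> Lambda_alpha \<alpha> (gradf x) (Dg x) (Dh x) (g x) (h x).
            (u, v) \<in> K_alpha \<alpha> (gradf x) (Dg x) (Dh x) (g x) (h x) \<and>
            (\<forall>(u', v') \<in> K_alpha \<alpha> (gradf x) (Dg x) (Dh x) (g x) (h x).
               (norm (transpose (Dg x) *v u + transpose (Dh x) *v v))\<^sup>2
                 \<le> (norm (transpose (Dg x) *v u' + transpose (Dh x) *v v'))\<^sup>2))
       \<and> (\<forall>u v. (u, v) \<in> K_alpha \<alpha> (gradf x) (Dg x) (Dh x) (g x) (h x) \<and>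
            (\<forall>(u', v') \<in> K_alpha \<alpha> (gradf x) (Dg x) (Dh x) (g x) (h x).
               (norm (transpose (Dg x) *v u + transpose (Dh x) *v v))\<^sup>2
                 \<le> (norm (transpose (Dg x) *v u' + transpose (Dh x) *v v'))\<^sup>2)
            \<longrightarrow> G_alpha \<alpha> (gradf x) (Dg x) (Dh x) (g x) (h x)
                  = - gradf x - transpose (Dg x) *v u - transpose (Dh x) *v v)"
  (is "?minimizes \<and> ?closed_loop")
proof
  let ?\<Lambda> = "Lambda_alpha \<alpha> (gradf x) (Dg x) (Dh x) (g x) (h x)"
  let ?K = "K_alpha \<alpha> (gradf x) (Dg x) (Dh x) (g x) (h x)"
  show ?minimizes
    using Lambda_alpha_subset_K_alpha Lambda_alpha_minimizes_on_K_alpha by fastforce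
  obtain u\<^sub>0 v\<^sub>0 where kkt: "(u\<^sub>0, v\<^sub>0) \<in> ?\<Lambda>"
    using Lambda_ne by auto
  then have "(u\<^sub>0, v\<^sub>0) \<in> ?K"
    using Lambda_alpha_subset_K_alpha by blast
  then show ?closed_loop
    using G_alpha_eq_closed_loop_field_of_minimizer[OF kkt]
    unfolding closed_loop_field_def by blast
qed

end
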